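(* Let $L$ be a unimodular lattice, $c\colon L\to L$ an involution, and $v\in L_-(c)$ with $v^2=-2$; put $c_v=c\circ s_v$. Then (1) if $v$ is odd, then $d(c_v)=d(c)+1$; (2) if $v$ is even, then $d(c_v)=d(c)-1$; (3) $v$ is a Wu element with respect to $c$ if and only if $c_v$ is an even involution. In particular, if $c_v$ is even, then $d(c_v)=d(c)-1$.
   Context: A lattice is a finite rank free abelian group with an integral symmetric bilinear form $\langle x,y\rangle$, $x^2=\langle x,x\rangle$. Standing assumption: if $L$ is odd, it has a characteristic element (an element $w$ with $x^2\equiv\langle w,x\rangle \bmod 2$ for all $x$) lying in $L_+(c)$ or in $L_-(c)$. $L_\pm(c)=\operatorname{Ker}(1\mp c)$; their discriminant groups are $2$-periodic and isomorphic to $L/(L_++L_-)$; $d(c)$ is the rank of this $2$-periodic group. For $v^2=-2$, $s_v(x)=x+\langle x,v\rangle v$ (it commutes with $c$ since $v\in L_-$). An element $h\in L_-(c)$ is even if $\langle h,l\rangle$ is even for all $l\in L_-(c)$, odd otherwise; an even $h\in L_-(c)$ is a Wu element if $x^2+\langle x,cx\rangle\equiv\langle x,h\rangle \bmod 2$ for all $x\in L$ (equivalently, $\tfrac12 h$ represents the characteristic element of the discriminant bilinear form of $L_-$). An involution $c$ is even if $\langle x,cx\rangle+x^2$ is even for all $x\in L$. *)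

theory Defs
  imports "HOL-Analysis.Analysis"
begin

text \<open>A lattice of rank CARD('n) is modelled as the free abelian group int^'n together with
  an integral symmetric Gram matrix G; the bilinear form is x^T G y.\<close>

definition bil :: "int^'n^'n \<Rightarrow> int^'n \<Rightarrow> int^'n \<Rightarrow> int" where
  "bil G x y = (\<Sum>i\<in>UNIV. x$i * (G *v y)$i)"

definition lattice_form :: "int^'n^'n \<Rightarrow> bool" where
  "lattice_form G \<longleftrightarrow> transpose G = G"

definition unimodular :: "int^'n^'n \<Rightarrow> bool" where
  "unimodular G \<longleftrightarrow> lattice_form G \<and> (det G = 1 \<or> det G = -1)"

definition lat_involution :: "int^'n^'n \<Rightarrow> (int^'n \<Rightarrow> int^'n) \<Rightarrow> bool" where
  "lat_involution G c \<longleftrightarrow> (\<forall>x y. c (x + y) = c x + c y) \<and> (\<forall>x. c (c x) = x)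
     \<and> (\<forall>x y. bil G (c x) (c y) = bil G x y)"

definition Lplus :: "(int^'n \<Rightarrow> int^'n) \<Rightarrow> (int^'n) set" where
  "Lplus c = {x. c x = x}"

definition Lminus :: "(int^'n \<Rightarrow> int^'n) \<Rightarrow> (int^'n) set" where
  "Lminus c = {x. c x = - x}"

definition zspan :: "(int^'n) set \<Rightarrow> (int^'n) set" where
  "zspan S = {(\<Sum>s\<in>F. k s *s s) | F k. finite F \<and> F \<subseteq> S}"

text \<open>d(c): the rank (minimal number of generators) of the group L/(L_+ + L_-).\<close>
definition dinv :: "(int^'n \<Rightarrow> int^'n) \<Rightarrow> nat" where
  "dinv c = (LEAST k. \<exists>S. finite S \<and> card S = k \<and> zspan (S \<union> Lplus c \<union> Lminus c) = UNIV)"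

definition odd_lattice :: "int^'n^'n \<Rightarrow> bool" where
  "odd_lattice G \<longleftrightarrow> (\<exists>x. odd (bil G x x))"

definition characteristic :: "int^'n^'n \<Rightarrow> int^'n \<Rightarrow> bool" where
  "characteristic G w \<longleftrightarrow> (\<forall>x. bil G x x mod 2 = bil G w x mod 2)"

definition standing_assumption :: "int^'n^'n \<Rightarrow> (int^'n \<Rightarrow> int^'n) \<Rightarrow> bool" where
  "standing_assumption G c \<longleftrightarrow>
     (odd_lattice G \<longrightarrow> (\<exists>w. characteristic G w \<and> (w \<in> Lplus c \<or> w \<in> Lminus c)))"

definition refl_v :: "int^'n^'n \<Rightarrow> int^'n \<Rightarrow> int^'n \<Rightarrow> int^'n" where
  "refl_v G v x = x + bil G x v *s v"

definition even_elt :: "int^'n^'n \<Rightarrow> (int^'n \<Rightarrow> int^'n) \<Rightarrow> int^'n \<Rightarrow> bool" where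
  "even_elt G c h \<longleftrightarrow> h \<in> Lminus c \<and> (\<forall>l\<in>Lminus c. even (bil G h l))"

definition odd_elt :: "int^'n^'n \<Rightarrow> (int^'n \<Rightarrow> int^'n) \<Rightarrow> int^'n \<Rightarrow> bool" where
  "odd_elt G c h \<longleftrightarrow> h \<in> Lminus c \<and> (\<exists>l\<in>Lminus c. odd (bil G h l))"

definition wu_elt :: "int^'n^'n \<Rightarrow> (int^'n \<Rightarrow> int^'n) \<Rightarrow> int^'n \<Rightarrow> bool" where
  "wu_elt G c h \<longleftrightarrow> even_elt G c h \<and>
     (\<forall>x. (bil G x x + bil G x (c x)) mod 2 = bil G x h mod 2)"

definition even_involution :: "int^'n^'n \<Rightarrow> (int^'n \<Rightarrow> int^'n) \<Rightarrow> bool" where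
  "even_involution G c \<longleftrightarrow> lat_involution G c \<and> (\<forall>x. even (bil G x (c x) + bil G x x))"

end

theory Submission
  imports Defs "HOL-Library.Z2"
begin

(* Write c_v = c o s_v. Since 2x = (x + cx) + (x - cx), the subgroup L_+ + L_- contains 2L, so
  d(c) is the dimension of the F_2-vector space L/(L_+ + L_-).

  If v pairs oddly with some m in L_-(c), then every element of L_+(c_v) + L_-(c_v) pairs evenly
  with v, so m lies outside this subgroup, while adjoining m to it gives L_+(c) + L_-(c); hence
  d(c_v) = d(c) + 1.

  If v is even, unimodularity gives v = x - cx for some x: reduced mod 2, 1 - c is self-adjoint for
  a nondegenerate form, so its image is the annihilator of its kernel, and v annihilates that kernel.
  Then x.v = -1 and c_v x = x, so v is odd for the involution -c_v, whose composite with s_v is -c.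
  The odd case for -c_v gives d(c) = d(-c) = d(-c_v) + 1 = d(c_v) + 1.

  Finally x.c_v x = x.cx - (x.v)^2 and (x.v)^2 = x.v mod 2, so c_v is even exactly when
  x^2 + x.cx = x.v mod 2 for all x; for x in L_- the left side vanishes, which forces v to be even. *)

lemma bil_expand: "bil G x y = (\<Sum>i\<in>UNIV. \<Sum>j\<in>UNIV. x$i * G$i$j * y$j)"
  unfolding bil_def matrix_vector_mult_def by (simp add: sum_distrib_left mult.assoc)

lemma bil_add_left: "bil G (x + y) z = bil G x z + bil G y z"
  unfolding bil_def by (simp add: sum.distrib algebra_simps)

lemma bil_add_right: "bil G x (y + z) = bil G x y + bil G x z"
  unfolding bil_expand by (simp add: sum.distrib algebra_simps)

lemma bil_scale_left: "bil G (k *s x) y = k * bil G x y"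
  unfolding bil_def by (simp add: sum_distrib_left algebra_simps)

lemma bil_scale_right: "bil G x (k *s y) = k * bil G x y"
  unfolding bil_expand by (simp add: sum_distrib_left algebra_simps)

lemma bil_zero_left [simp]: "bil G 0 y = 0"
  unfolding bil_def by simp

lemma bil_minus_left: "bil G (- x) y = - bil G x y"
  unfolding bil_def by (simp add: sum_negf)

lemma bil_minus_right: "bil G x (- y) = - bil G x y"
  unfolding bil_expand by (simp add: sum_negf)

lemma bil_diff_left: "bil G (x - y) z = bil G x z - bil G y z"
  using bil_add_left[of G x "- y" z] by (simp add: bil_minus_left)

lemma bil_diff_right: "bil G x (y - z) = bil G x y - bil G x z"
  using bil_add_right[of G x y "- z"] by (simp add: bil_minus_right)

lemma bil_commute:
  assumes "lattice_form G"
  shows "bil G x y = bil G y x"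
proof -
  have "G$i$j = G$j$i" for i j
    using assms unfolding lattice_form_def by (metis transpose_def vec_lambda_beta)
  then show ?thesis
    unfolding bil_expand by (subst sum.swap) (simp add: mult.commute mult.left_commute)
qed

section \<open>Generators modulo a subgroup\<close>

interpretation zm: module "(*s) :: int \<Rightarrow> int^'n \<Rightarrow> int^'n"
  by unfold_locales (simp_all add: vector_add_ldistrib vector_sadd_rdistrib vector_smult_assoc)

lemma zspan_eq_span: "zspan S = zm.span S"
  unfolding zspan_def zm.span_explicit ..

definition min_gens_mod :: "(int^'n) set \<Rightarrow> nat" where
  "min_gens_mod H = (LEAST k. \<exists>S. finite S \<and> card S = k \<and> zm.span (S \<union> H) = UNIV)"

lemma dinv_eq_min_gens_mod: "dinv c = min_gens_mod (Lplus c \<union> Lminus c)"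
  unfolding dinv_def min_gens_mod_def zspan_eq_span by (simp add: Un_assoc)

lemma span_axes: "zm.span (range (\<lambda>i. axis i 1)) = UNIV"
proof -
  have "(\<Sum>i\<in>UNIV. x$i *s axis i 1) \<in> zm.span (range (\<lambda>i. axis i 1))" for x :: "int^'n"
    by (intro zm.span_sum zm.span_scale zm.span_base) auto
  then show ?thesis
    by (auto simp: basis_expansion)
qed

lemma min_gens_mod_le:
  "finite S \<Longrightarrow> zm.span (S \<union> H) = UNIV \<Longrightarrow> min_gens_mod H \<le> card S"
  unfolding min_gens_mod_def by (rule Least_le) blast

lemma min_gens_mod_witness:
  fixes H :: "(int^'n) set"
  obtains S where "finite S" "card S = min_gens_mod H" "zm.span (S \<union> H) = UNIV"
proof -
  let ?A = "range (\<lambda>i. axis i 1) :: (int^'n) set"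
  have "zm.span ?A \<subseteq> zm.span (?A \<union> H)"
    by (rule zm.span_mono) blast
  then have "\<exists>k S. finite S \<and> card S = k \<and> zm.span (S \<union> H) = UNIV"
    using span_axes by (intro exI[of _ "card ?A"] exI[of _ ?A]) auto
  then have "\<exists>S. finite S \<and> card S = min_gens_mod H \<and> zm.span (S \<union> H) = UNIV"
    unfolding min_gens_mod_def by (rule LeastI_ex)
  then show ?thesis
    using that by blast
qed

lemma span_Un_cong: "zm.span H1 = zm.span H2 \<Longrightarrow> zm.span (S \<union> H1) = zm.span (S \<union> H2)"
  unfolding zm.span_Un by simp

lemma min_gens_mod_cong:
  assumes "zm.span H1 = zm.span H2"
  shows "min_gens_mod H1 = min_gens_mod H2"
  unfolding min_gens_mod_def span_Un_cong[OF assms] ..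

lemma min_gens_mod_insert_le: "min_gens_mod H \<le> min_gens_mod (insert m H) + 1"
proof -
  obtain S where S: "finite S" "card S = min_gens_mod (insert m H)"
    and span_S: "zm.span (S \<union> insert m H) = UNIV"
    by (rule min_gens_mod_witness)
  have "insert m S \<union> H = S \<union> insert m H"
    by blast
  then have "min_gens_mod H \<le> card (insert m S)"
    using S span_S by (intro min_gens_mod_le) auto
  also have "\<dots> \<le> card S + 1"
    using S by (simp add: card_insert_if)
  finally show ?thesis
    using S by simp
qed

lemma span_even_combination:
  assumes "\<And>x. 2 *s x \<in> zm.span H" and "\<And>s. s \<in> S \<Longrightarrow> even (u s)"
  shows "(\<Sum>s\<in>S. u s *s s) \<in> zm.span H"
proof (rule zm.span_sum)
  fix s assume "s \<in> S"
  then have "u s *s s = 2 *s ((u s div 2) *s s)"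
    using assms(2) by (simp add: vector_smult_assoc)
  then show "u s *s s \<in> zm.span H"
    using assms(1) by metis
qed

lemma span_of_odd_multiple:
  assumes "\<And>x. 2 *s x \<in> zm.span H" and "odd k" and "k *s s \<in> zm.span H"
  shows "s \<in> zm.span H"
proof -
  obtain j where "k = 2 * j + 1"
    using \<open>odd k\<close> by (rule oddE)
  then have "s = k *s s - 2 *s (j *s s)"
    by (simp add: vec_eq_iff algebra_simps)
  then show ?thesis
    using assms(1,3) zm.span_diff by metis
qed

lemma exchange_odd_coefficient:
  assumes two: "\<And>x. 2 *s x \<in> zm.span H" and S: "finite S"
    and s0: "s0 \<in> S" "odd (u s0)"
    and m: "m = (\<Sum>s\<in>S. u s *s s) + h" and h: "h \<in> zm.span H"
  shows "s0 \<in> zm.span ((S - {s0}) \<union> insert m H)"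
proof -
  let ?T = "zm.span ((S - {s0}) \<union> insert m H)"
  have H_T: "zm.span H \<subseteq> ?T"
    by (rule zm.span_mono) blast
  have "u s0 *s s0 = m - h - (\<Sum>s\<in>S - {s0}. u s *s s)"
    using m sum.remove[OF S s0(1), of "\<lambda>s. u s *s s"] by simp
  also have "\<dots> \<in> ?T"
  proof (intro zm.span_diff)
    show "m \<in> ?T"
      by (rule zm.span_base) blast
    show "h \<in> ?T"
      using h H_T by blast
    show "(\<Sum>s\<in>S - {s0}. u s *s s) \<in> ?T"
      by (intro zm.span_sum zm.span_scale zm.span_base) blast
  qed
  finally have "u s0 *s s0 \<in> ?T" .
  moreover have two_T: "2 *s x \<in> ?T" for x
    using two H_T by blast
  ultimately show ?thesis
    using span_of_odd_multiple[OF two_T s0(2)] by blast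
qed

lemma min_gens_mod_insert_ge:
  assumes two: "\<And>x. 2 *s x \<in> zm.span H" and m: "m \<notin> zm.span H"
  shows "min_gens_mod (insert m H) + 1 \<le> min_gens_mod H"
proof -
  obtain S where S: "finite S" "card S = min_gens_mod H" and span_S: "zm.span (S \<union> H) = UNIV"
    by (rule min_gens_mod_witness)
  have "m \<in> zm.span (S \<union> H)"
    using span_S by simp
  then obtain x h where m_eq: "m = x + h" and x: "x \<in> zm.span S" and h: "h \<in> zm.span H"
    unfolding zm.span_Un by blast
  obtain u where u: "x = (\<Sum>s\<in>S. u s *s s)"
    using x unfolding zm.span_finite[OF S(1)] by blast
  have "\<exists>s0\<in>S. odd (u s0)"
  proof (rule ccontr)
    assume "\<not> (\<exists>s0\<in>S. odd (u s0))"
    then have "x \<in> zm.span H"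
      unfolding u using two by (intro span_even_combination) auto
    then show False
      using m m_eq h zm.span_add by blast
  qed
  then obtain s0 where s0: "s0 \<in> S" "odd (u s0)"
    by blast
  let ?T = "zm.span ((S - {s0}) \<union> insert m H)"
  have "m = (\<Sum>s\<in>S. u s *s s) + h"
    using m_eq u by simp
  then have "s0 \<in> ?T"
    by (rule exchange_odd_coefficient[where u = u, OF two S(1) s0 _ h])
  moreover have "S - {s0} \<subseteq> ?T" and "H \<subseteq> ?T"
    using zm.span_superset[of "(S - {s0}) \<union> insert m H"] by blast+
  ultimately have "zm.span (S \<union> H) \<subseteq> ?T"
    by (intro zm.span_minimal[OF _ zm.subspace_span]) blast
  then have "min_gens_mod (insert m H) \<le> card (S - {s0})"
    using S(1) unfolding span_S by (simp add: min_gens_mod_le top.extremum_unique)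
  moreover have "card S > 0"
    using S(1) s0(1) by (auto simp: card_gt_0_iff)
  ultimately show ?thesis
    using S s0(1) by simp
qed

lemma min_gens_mod_insert:
  assumes "\<And>x. 2 *s x \<in> zm.span H" and "m \<notin> zm.span H"
  shows "min_gens_mod H = min_gens_mod (insert m H) + 1"
  using min_gens_mod_insert_le min_gens_mod_insert_ge[OF assms] by (rule antisym)

locale lattice_involution =
  fixes G :: "int^'n^'n" and c :: "int^'n \<Rightarrow> int^'n"
  assumes involution: "lat_involution G c"
begin

sublocale c: additive c
  using involution by unfold_locales (simp add: lat_involution_def)

lemma involutive [simp]: "c (c x) = x"
  using involution by (simp add: lat_involution_def)

lemma isometry: "bil G (c x) (c y) = bil G x y"
  using involution by (simp add: lat_involution_def)

lemma adjoint: "bil G (c x) y = bil G x (c y)"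
  using isometry[of x "c y"] by simp

lemma scale: "c (k *s x) = k *s c x"
proof (induction k rule: int_induct[where k = 0])
  case base
  then show ?case
    by (simp add: c.zero)
next
  case (step1 i)
  then show ?case
    by (simp add: vector_sadd_rdistrib c.add)
next
  case (step2 i)
  then show ?case
    by (simp add: vector_sub_rdistrib c.diff)
qed

lemma Lplus_orthogonal_Lminus: "p \<in> Lplus c \<Longrightarrow> m \<in> Lminus c \<Longrightarrow> bil G p m = 0"
  using adjoint[of p m] by (simp add: Lplus_def Lminus_def bil_minus_right)

lemma Lminus_orthogonal_Lplus: "m \<in> Lminus c \<Longrightarrow> p \<in> Lplus c \<Longrightarrow> bil G m p = 0"
  using adjoint[of m p] by (simp add: Lplus_def Lminus_def bil_minus_left)

lemma Lminus_add: "x \<in> Lminus c \<Longrightarrow> y \<in> Lminus c \<Longrightarrow> x + y \<in> Lminus c"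
  by (simp add: Lminus_def c.add)

lemma Lminus_diff: "x \<in> Lminus c \<Longrightarrow> y \<in> Lminus c \<Longrightarrow> x - y \<in> Lminus c"
  by (simp add: Lminus_def c.diff)

lemma Lminus_scale: "x \<in> Lminus c \<Longrightarrow> k *s x \<in> Lminus c"
  by (simp add: Lminus_def scale vector_smult_rneg)

lemma Lminus_half: "2 *s x \<in> Lminus c \<Longrightarrow> x \<in> Lminus c"
  by (simp add: Lminus_def scale vec_eq_iff)

lemma diff_in_Lminus: "x - c x \<in> Lminus c"
  by (simp add: Lminus_def c.diff)

lemma double_in_span: "2 *s x \<in> zm.span (Lplus c \<union> Lminus c)"
proof -
  have "x + c x \<in> zm.span (Lplus c \<union> Lminus c)"
    by (rule zm.span_base) (simp add: Lplus_def c.add add.commute)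
  moreover have "x - c x \<in> zm.span (Lplus c \<union> Lminus c)"
    using diff_in_Lminus by (intro zm.span_base) simp
  moreover have "(x + c x) + (x - c x) = 2 *s x"
    by (simp add: vec_eq_iff)
  ultimately show ?thesis
    by (metis zm.span_add)
qed

lemma neg_involution: "lat_involution G (\<lambda>x. - c x)"
  unfolding lat_involution_def by (simp add: c.add c.minus isometry bil_minus_left bil_minus_right)

end

lemma Lplus_neg: "Lplus (\<lambda>x. - c x) = Lminus c"
  unfolding Lplus_def Lminus_def by (metis minus_minus)

lemma Lminus_neg: "Lminus (\<lambda>x. - c x) = Lplus c"
  unfolding Lplus_def Lminus_def by (metis minus_minus)

lemma dinv_neg: "dinv (\<lambda>x. - c x) = dinv c"
  unfolding dinv_eq_min_gens_mod Lplus_neg Lminus_neg by (simp add: Un_commute)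

section \<open>Characters of finite groups with values in F_2\<close>

lemma UNIV_bit: "(UNIV :: bit set) = {0, 1}"
  using bit_not_zero_iff by blast

instance bit :: finite
  by standard (simp add: UNIV_bit)

definition bit_sign :: "bit \<Rightarrow> int" where
  "bit_sign b = (if b = 0 then 1 else -1)"

lemma bit_sign_add_one: "bit_sign (b + 1) = - bit_sign b"
  by (cases b) (simp_all add: bit_sign_def)

lemma card_eq_card_range_mult_card_kernel:
  fixes f :: "'v::{finite, ab_group_add} \<Rightarrow> 'w::ab_group_add"
  assumes "Modules.additive f"
  shows "CARD('v) = card (range f) * card {x. f x = 0}"
proof -
  interpret f: additive f by fact
  have "(\<Union>y\<in>range f. f -` {y}) = UNIV"
    by blast
  then have "CARD('v) = card (\<Union>y\<in>range f. f -` {y})"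
    by simp
  also have "\<dots> = (\<Sum>y\<in>range f. card (f -` {y}))"
    by (rule card_UN_disjoint) auto
  also have "\<dots> = (\<Sum>y\<in>range f. card {x. f x = 0})"
  proof (rule sum.cong[OF refl])
    fix y assume "y \<in> range f"
    then obtain x0 where x0: "y = f x0" by blast
    have "bij_betw (\<lambda>k. k + x0) {x. f x = 0} (f -` {y})"
      by (rule bij_betwI[where g = "\<lambda>x. x - x0"]) (auto simp: x0 f.add f.diff)
    then show "card (f -` {y}) = card {x. f x = 0}"
      by (simp add: bij_betw_same_card)
  qed
  finally show ?thesis
    by simp
qed

lemma sum_bit_sign_eq_0:
  fixes \<phi> :: "'v::ab_group_add \<Rightarrow> bit"
  assumes W: "\<And>w. w + a \<in> W \<longleftrightarrow> w \<in> W" and \<phi>: "\<And>w. \<phi> (w + a) = \<phi> w + 1"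
  shows "(\<Sum>w\<in>W. bit_sign (\<phi> w)) = 0"
proof -
  have "w - a \<in> W" if "w \<in> W" for w
    using W[of "w - a"] that by simp
  then have "bij_betw (\<lambda>w. w + a) W W"
    by (intro bij_betwI[where g = "\<lambda>w. w - a"]) (auto simp: W)
  then have "(\<Sum>w\<in>W. bit_sign (\<phi> w)) = (\<Sum>w\<in>W. bit_sign (\<phi> (w + a)))"
    by (rule sum.reindex_bij_betw[symmetric])
  also have "\<dots> = - (\<Sum>w\<in>W. bit_sign (\<phi> w))"
    by (simp only: \<phi> bit_sign_add_one sum_negf)
  finally show ?thesis
    by simp
qed

lemma sum_bit_sign_character:
  fixes \<phi> :: "'v::ab_group_add \<Rightarrow> bit"
  assumes \<phi>: "\<And>x y. \<phi> (x + y) = \<phi> x + \<phi> y"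
    and W: "\<And>x y. x \<in> W \<Longrightarrow> y \<in> W \<Longrightarrow> x + y \<in> W" "\<And>x. x \<in> W \<Longrightarrow> - x \<in> W"
  shows "(\<Sum>w\<in>W. bit_sign (\<phi> w)) = (if \<forall>w\<in>W. \<phi> w = 0 then int (card W) else 0)"
proof (cases "\<forall>w\<in>W. \<phi> w = 0")
  case True
  then show ?thesis
    by (simp add: bit_sign_def)
next
  case False
  then obtain a where a: "a \<in> W" "\<phi> a = 1"
    by auto
  have "w + a \<in> W \<longleftrightarrow> w \<in> W" for w
    using W(1)[of "w + a" "- a"] W(1)[of w a] W(2)[OF a(1)] a(1) by auto
  moreover have "\<phi> (w + a) = \<phi> w + 1" for w
    by (simp only: \<phi> a(2))
  ultimately have "(\<Sum>w\<in>W. bit_sign (\<phi> w)) = 0"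
    by (rule sum_bit_sign_eq_0)
  then show ?thesis
    by (simp only: if_not_P[OF False])
qed

lemma card_mult_card_annihilator:
  fixes b :: "'v::{finite, ab_group_add} \<Rightarrow> 'v \<Rightarrow> bit"
  assumes add_left: "\<And>x y z. b (x + y) z = b x z + b y z"
    and add_right: "\<And>x y z. b x (y + z) = b x y + b x z"
    and nondegenerate: "\<And>w. w \<noteq> 0 \<Longrightarrow> \<exists>x. b x w \<noteq> 0"
    and W: "0 \<in> W" "\<And>x y. x \<in> W \<Longrightarrow> y \<in> W \<Longrightarrow> x + y \<in> W"
      "\<And>x. x \<in> W \<Longrightarrow> - x \<in> W"
  shows "card W * card {x. \<forall>w\<in>W. b x w = 0} = CARD('v)"
proof -
  let ?A = "{x. \<forall>w\<in>W. b x w = 0}"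
  \<comment> \<open>sum the characters w \<mapsto> (-1)^(b x w) over 'v \<times> W in both orders\<close>
  have "(\<Sum>w\<in>W. bit_sign (b x w)) = (if x \<in> ?A then int (card W) else 0)" for x
    using sum_bit_sign_character[of "b x" W, OF add_right W(2,3)] by simp
  then have rows: "(\<Sum>x\<in>UNIV. \<Sum>w\<in>W. bit_sign (b x w)) = int (card W) * int (card ?A)"
    by (simp add: sum.If_cases)
  have "b x 0 = 0" for x
    using add_right[of x 0 0] by simp
  then have "(\<forall>x. b x w = 0) \<longleftrightarrow> w = 0" for w
    using nondegenerate[of w] by blast
  then have "(\<Sum>x\<in>UNIV. bit_sign (b x w)) = (if w = 0 then int CARD('v) else 0)" for w
    using sum_bit_sign_character[where \<phi> = "\<lambda>x. b x w" and W = UNIV] by (simp add: add_left)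
  then have columns: "(\<Sum>w\<in>W. \<Sum>x\<in>UNIV. bit_sign (b x w)) = int CARD('v)"
    using W(1) by (simp add: sum.delta finite_subset)
  show ?thesis
    using rows columns sum.swap[of "\<lambda>x w. bit_sign (b x w)" W UNIV] by (simp flip: of_nat_mult)
qed

lemma range_eq_annihilator_of_kernel:
  fixes f :: "'v::{finite, ab_group_add} \<Rightarrow> 'v" and b :: "'v \<Rightarrow> 'v \<Rightarrow> bit"
  assumes "Modules.additive f"
    and add_left: "\<And>x y z. b (x + y) z = b x z + b y z"
    and add_right: "\<And>x y z. b x (y + z) = b x y + b x z"
    and nondegenerate: "\<And>w. w \<noteq> 0 \<Longrightarrow> \<exists>x. b x w \<noteq> 0"
    and self_adjoint: "\<And>x y. b (f x) y = b x (f y)"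
  shows "range f = {x. \<forall>k\<in>{k. f k = 0}. b x k = 0}"
proof -
  interpret f: additive f by fact
  let ?K = "{k. f k = 0}" and ?A = "{x. \<forall>k\<in>{k. f k = 0}. b x k = 0}"
  have "card ?K * card ?A = CARD('v)"
    by (rule card_mult_card_annihilator[OF add_left add_right nondegenerate])
      (simp_all add: f.zero f.add f.minus)
  also have "\<dots> = card ?K * card (range f)"
    using card_eq_card_range_mult_card_kernel[OF \<open>Modules.additive f\<close>] by simp
  moreover have "card ?K \<noteq> 0"
    using f.zero by (auto simp: card_eq_0_iff)
  ultimately have "card (range f) = card ?A"
    by simp
  moreover have "range f \<subseteq> ?A"
    using add_right[of _ 0 0] by (auto simp: self_adjoint)
  ultimately show ?thesis
    by (intro card_subset_eq) simp_all
qed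

section \<open>Reduction mod 2\<close>

definition mod2 :: "int^'n \<Rightarrow> bit^'n" where
  "mod2 x = (\<chi> i. of_int (x$i))"

definition lift_mod2 :: "bit^'n \<Rightarrow> int^'n" where
  "lift_mod2 y = (\<chi> i. of_bit (y$i))"

definition bil_mod2 :: "int^'n^'n \<Rightarrow> bit^'n \<Rightarrow> bit^'n \<Rightarrow> bit" where
  "bil_mod2 G y z = (\<Sum>i\<in>UNIV. y$i * ((\<chi> j. mod2 (G$j)) *v z)$i)"

lemma of_int_bit_eq_0_iff: "(of_int k :: bit) = 0 \<longleftrightarrow> even k"
proof (cases "even k")
  case True
  then obtain m where "k = 2 * m" ..
  then show ?thesis
    by simp
next
  case False
  then obtain m where "k = 2 * m + 1" ..
  then show ?thesis
    by simp
qed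

lemma mod2_add: "mod2 (x + y) = mod2 x + mod2 y"
  by (simp add: mod2_def vec_eq_iff)

lemma mod2_diff: "mod2 (x - y) = mod2 x - mod2 y"
  by (simp add: mod2_def vec_eq_iff)

lemma mod2_eq_0_iff: "mod2 x = 0 \<longleftrightarrow> (\<exists>u. x = 2 *s u)"
proof
  assume "mod2 x = 0"
  then have "even (x$i)" for i
    by (simp add: mod2_def vec_eq_iff of_int_bit_eq_0_iff)
  then have "x = 2 *s (\<chi> i. x$i div 2)"
    by (simp add: vec_eq_iff)
  then show "\<exists>u. x = 2 *s u" ..
qed (auto simp: mod2_def vec_eq_iff)

lemma mod2_eq_iff: "mod2 x = mod2 y \<longleftrightarrow> (\<exists>u. x = y + 2 *s u)"
  using mod2_eq_0_iff[of "x - y"] by (auto simp: mod2_diff algebra_simps)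

lemma mod2_lift_mod2 [simp]: "mod2 (lift_mod2 y) = y"
proof -
  have "of_int (of_bit b) = b" for b :: bit
    by (cases b) simp_all
  then show ?thesis
    by (simp add: mod2_def lift_mod2_def vec_eq_iff)
qed

lemma lift_mod2_mod2: "\<exists>u. lift_mod2 (mod2 x) = x + 2 *s u"
  using mod2_eq_iff mod2_lift_mod2 by blast

lemma bil_mod2_mod2: "bil_mod2 G (mod2 x) (mod2 y) = of_int (bil G x y)"
  by (simp add: bil_mod2_def bil_def mod2_def matrix_vector_mult_def of_int_sum)

lemma bil_mod2_add_left: "bil_mod2 G (x + y) z = bil_mod2 G x z + bil_mod2 G y z"
  unfolding bil_mod2_def by (simp only: vector_add_component distrib_right sum.distrib)

lemma bil_mod2_add_right: "bil_mod2 G x (y + z) = bil_mod2 G x y + bil_mod2 G x z"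
  unfolding bil_mod2_def
  by (simp only: matrix_vector_right_distrib vector_add_component distrib_left sum.distrib)

lemma sum_axis_mult: "(\<Sum>i\<in>UNIV. axis j (1::'a::semiring_1) $ i * u $ i) = u $ j"
proof -
  have "(\<Sum>i\<in>UNIV. axis j 1 $ i * u $ i) = (\<Sum>i\<in>UNIV. if i = j then u $ i else 0)"
    by (rule sum.cong) (simp_all add: axis_def)
  then show ?thesis
    by simp
qed

lemma det_of_int: "det (\<chi> i j. (of_int (A$i$j) :: 'a::comm_ring_1)) = of_int (det A)"
  unfolding det_def by (simp add: of_int_sum of_int_prod)

lemma bil_mod2_nondegenerate:
  assumes "unimodular G" and "w \<noteq> 0"
  shows "\<exists>y. bil_mod2 G y w \<noteq> 0"
proof (rule ccontr)
  let ?M = "\<chi> j. mod2 (G$j)"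
  assume "\<nexists>y. bil_mod2 G y w \<noteq> 0"
  then have "bil_mod2 G (axis j 1) w = 0" for j
    by blast
  then have "(?M *v w)$j = 0" for j
    unfolding bil_mod2_def sum_axis_mult .
  then have "?M *v w = 0"
    by (simp add: vec_eq_iff)
  moreover have "det ?M = of_int (det G)"
    using det_of_int[of G] by (simp add: mod2_def)
  then have "inj ((*v) ?M)"
    using assms(1) by (auto simp: unimodular_def invertible_det_nz inj_matrix_vector_mult)
  ultimately show False
    using assms(2) by (metis matrix_vector_mult_0_right injD)
qed

context lattice_involution
begin

definition coboundary_mod2 :: "bit^'n \<Rightarrow> bit^'n" where
  "coboundary_mod2 y = mod2 (lift_mod2 y - c (lift_mod2 y))"

lemma coboundary_mod2_mod2: "coboundary_mod2 (mod2 x) = mod2 (x - c x)"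
proof -
  obtain u where u: "lift_mod2 (mod2 x) = x + 2 *s u"
    using lift_mod2_mod2 by blast
  have "(x + 2 *s u) - c (x + 2 *s u) = (x - c x) + 2 *s (u - c u)"
    by (simp add: c.add scale vector_ssub_ldistrib)
  then show ?thesis
    unfolding coboundary_mod2_def u mod2_eq_iff by blast
qed

lemma coboundary_mod2_additive: "Modules.additive coboundary_mod2"
proof
  fix y z :: "bit^'n"
  let ?y = "lift_mod2 y" and ?z = "lift_mod2 z"
  have "coboundary_mod2 (y + z) = coboundary_mod2 (mod2 (?y + ?z))"
    by (simp add: mod2_add)
  also have "\<dots> = mod2 ((?y - c ?y) + (?z - c ?z))"
    by (simp add: coboundary_mod2_mod2 c.add algebra_simps)
  finally show "coboundary_mod2 (y + z) = coboundary_mod2 y + coboundary_mod2 z"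
    by (simp add: mod2_add coboundary_mod2_def)
qed

lemma coboundary_mod2_self_adjoint:
  "bil_mod2 G (coboundary_mod2 y) z = bil_mod2 G y (coboundary_mod2 z)"
proof -
  have "bil_mod2 G (coboundary_mod2 (mod2 x)) (mod2 x') =
      bil_mod2 G (mod2 x) (coboundary_mod2 (mod2 x'))" for x x'
    by (simp add: coboundary_mod2_mod2 bil_mod2_mod2 bil_diff_left bil_diff_right adjoint)
  from this[of "lift_mod2 y" "lift_mod2 z"] show ?thesis
    by simp
qed

lemma even_Lminus_annihilates_kernel_mod2:
  assumes v: "v \<in> Lminus c" and even: "\<And>l. l \<in> Lminus c \<Longrightarrow> even (bil G v l)"
    and k: "coboundary_mod2 k = 0"
  shows "bil_mod2 G (mod2 v) k = 0"
proof -
  let ?x = "lift_mod2 k"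
  have "mod2 (?x - c ?x) = 0"
    using k unfolding coboundary_mod2_def .
  then obtain u where u: "?x - c ?x = 2 *s u"
    unfolding mod2_eq_0_iff ..
  then have "2 *s u \<in> Lminus c"
    using diff_in_Lminus[of ?x] by simp
  then have u_Lminus: "u \<in> Lminus c"
    by (rule Lminus_half)
  have "c ?x = ?x - (?x - c ?x)"
    by simp
  then have "c ?x = ?x - 2 *s u"
    by (simp only: u)
  then have "?x - u \<in> Lplus c"
    using u_Lminus by (simp add: Lplus_def Lminus_def c.diff vec_eq_iff)
  then have "bil G v (?x - u) = 0"
    by (rule Lminus_orthogonal_Lplus[OF v])
  then have "even (bil G v ?x)"
    using even[OF u_Lminus] by (simp add: bil_diff_right)
  then have "bil_mod2 G (mod2 v) (mod2 ?x) = 0"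
    unfolding bil_mod2_mod2 of_int_bit_eq_0_iff .
  then show ?thesis
    by simp
qed

lemma even_Lminus_is_coboundary:
  assumes "unimodular G" and v: "v \<in> Lminus c"
    and even: "\<And>l. l \<in> Lminus c \<Longrightarrow> even (bil G v l)"
  shows "\<exists>x. v = x - c x"
proof -
  have "range coboundary_mod2 = {y. \<forall>k\<in>{k. coboundary_mod2 k = 0}. bil_mod2 G y k = 0}"
    by (rule range_eq_annihilator_of_kernel[OF coboundary_mod2_additive bil_mod2_add_left
        bil_mod2_add_right bil_mod2_nondegenerate[OF assms(1)] coboundary_mod2_self_adjoint])
  then have "mod2 v \<in> range coboundary_mod2"
    using even_Lminus_annihilates_kernel_mod2[OF v even] by simp
  then obtain x where "mod2 v = mod2 (x - c x)"
    unfolding coboundary_mod2_def by blast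
  then obtain w where w: "v = (x - c x) + 2 *s w"
    using mod2_eq_iff by blast
  then have "2 *s w \<in> Lminus c"
    using Lminus_diff[OF v diff_in_Lminus[of x]] by simp
  then have "c w = - w"
    using Lminus_half[of w] unfolding Lminus_def by blast
  then have "v = (x + w) - c (x + w)"
    using w by (simp add: c.add vec_eq_iff)
  then show ?thesis ..
qed

end

section \<open>Reflection in a vector of square -2\<close>

lemma mod_2_eq_mod_2_iff: "(a::int) mod 2 = b mod 2 \<longleftrightarrow> (even a \<longleftrightarrow> even b)"
  by presburger

locale root_reflection = lattice_involution +
  fixes v
  assumes symmetric: "lattice_form G"
    and v_Lminus: "v \<in> Lminus c"
    and v_square: "bil G v v = -2"
begin

abbreviation cv where
  "cv \<equiv> c \<circ> refl_v G v"

lemma c_v: "c v = - v"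
  using v_Lminus by (simp add: Lminus_def)

lemma bil_c_left_v: "bil G (c x) v = - bil G x v"
  using adjoint[of x v] by (simp add: c_v bil_minus_right)

lemma bil_v_c_right: "bil G v (c x) = - bil G v x"
  using bil_c_left_v[of x] by (simp add: bil_commute[OF symmetric, of v])

lemma cv_apply: "cv x = c x - bil G x v *s v"
  by (simp add: refl_v_def c.add scale c_v vector_smult_rneg)

lemma refl_v_involutive: "refl_v G v (refl_v G v x) = x"
  unfolding refl_v_def by (simp add: bil_add_left bil_scale_left v_square vec_eq_iff algebra_simps)

lemma bil_cv_v: "bil G (cv x) v = bil G x v"
  unfolding cv_apply by (simp add: bil_diff_left bil_scale_left bil_c_left_v v_square)

lemma cv_involution: "lat_involution G cv"
  unfolding lat_involution_def
proof (intro conjI allI)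
  fix x y
  show "cv (x + y) = cv x + cv y"
    unfolding cv_apply by (simp add: c.add bil_add_left vector_sadd_rdistrib)
  show "cv (cv x) = x"
    unfolding cv_apply[of "cv x"] bil_cv_v unfolding cv_apply
    by (simp add: c.diff scale c_v vector_smult_rneg)
  let ?a = "bil G x v" and ?b = "bil G y v"
  have "bil G (cv x) (cv y) = bil G (c x) (c y) - ?b * bil G (c x) v - ?a * bil G v (c y)
      + ?a * ?b * bil G v v"
    unfolding cv_apply
    by (simp add: bil_diff_left bil_diff_right bil_scale_left bil_scale_right algebra_simps)
  also have "\<dots> = bil G x y"
    using bil_commute[OF symmetric, of v y]
    by (simp add: isometry bil_c_left_v bil_v_c_right v_square)
  finally show "bil G (cv x) (cv y) = bil G x y" .
qed

lemma v_Lplus_cv: "v \<in> Lplus cv"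
  unfolding Lplus_def cv_apply by (simp add: c_v v_square vec_eq_iff)

lemma Lplus_subset_Lplus_cv: "Lplus c \<subseteq> Lplus cv"
proof
  fix p assume p: "p \<in> Lplus c"
  then have "bil G p v = 0"
    using Lplus_orthogonal_Lminus v_Lminus by blast
  then show "p \<in> Lplus cv"
    using p unfolding Lplus_def cv_apply by simp
qed

lemma Lplus_cv_iff: "y \<in> Lplus cv \<longleftrightarrow> c y = y + bil G y v *s v"
  unfolding Lplus_def cv_apply by (auto simp: algebra_simps)

lemma Lminus_cv_iff: "y \<in> Lminus cv \<longleftrightarrow> y \<in> Lminus c \<and> bil G y v = 0"
proof
  assume "y \<in> Lminus cv"
  then have cy: "c y = bil G y v *s v - y"
    unfolding Lminus_def cv_apply by (simp add: algebra_simps)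
  have "- bil G y v = - 3 * bil G y v"
    using bil_c_left_v[of y] unfolding cy by (simp add: bil_diff_left bil_scale_left v_square)
  then have "bil G y v = 0"
    by simp
  then show "y \<in> Lminus c \<and> bil G y v = 0"
    using cy by (simp add: Lminus_def)
qed (simp add: Lminus_def refl_v_def)

lemma wu_elt_iff_even_involution: "wu_elt G c v \<longleftrightarrow> even_involution G cv"
proof -
  have cv_parity: "even (bil G x (cv x) + bil G x x) \<longleftrightarrow>
      (bil G x x + bil G x (c x)) mod 2 = bil G x v mod 2" for x
  proof -
    have "bil G x (cv x) = bil G x (c x) - bil G x v * bil G x v"
      unfolding cv_apply by (simp add: bil_diff_right bil_scale_right)
    then show ?thesis
      by (auto simp: mod_2_eq_mod_2_iff)
  qed
  have "even (bil G v l)" if "l \<in> Lminus c"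
      and "(bil G l l + bil G l (c l)) mod 2 = bil G l v mod 2" for l
    using that bil_commute[OF symmetric, of v l]
    by (auto simp: Lminus_def bil_minus_right even_iff_mod_2_eq_zero)
  then show ?thesis
    unfolding wu_elt_def even_elt_def even_involution_def
    using cv_parity cv_involution v_Lminus by blast
qed

lemma even_pairing_Lplus_cv:
  assumes m: "m \<in> Lminus c" and odd_m: "odd (bil G v m)" and y: "y \<in> Lplus cv"
  shows "even (bil G y v)"
proof -
  have "bil G (c y) m = - bil G y m"
    using adjoint[of y m] m by (simp add: Lminus_def bil_minus_right)
  moreover have "c y = y + bil G y v *s v"
    using y Lplus_cv_iff by blast
  ultimately have "bil G y v * bil G v m = - 2 * bil G y m"
    by (simp add: bil_add_left bil_scale_left)
  then have "even (bil G y v * bil G v m)"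
    by simp
  then show ?thesis
    using odd_m by simp
qed

lemma span_eigenspaces_cv_even_pairing:
  assumes "m \<in> Lminus c" and "odd (bil G v m)"
  shows "zm.span (Lplus cv \<union> Lminus cv) \<subseteq> {y. even (bil G y v)}"
proof (rule zm.span_minimal)
  show "Lplus cv \<union> Lminus cv \<subseteq> {y. even (bil G y v)}"
    using even_pairing_Lplus_cv[OF assms] Lminus_cv_iff by auto
  show "zm.subspace {y. even (bil G y v)}"
    unfolding zm.subspace_def by (simp add: bil_add_left bil_scale_left)
qed

lemma Lminus_subset_span_insert:
  assumes m: "m \<in> Lminus c" and odd_m: "odd (bil G v m)"
  shows "Lminus c \<subseteq> zm.span (insert m (Lplus cv \<union> Lminus cv))"
proof
  fix y assume y: "y \<in> Lminus c"
  let ?S = "zm.span (insert m (Lplus cv \<union> Lminus cv))"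
  define s where "s = bil G y v"
  have "even (s * (1 - bil G m v))"
    using odd_m bil_commute[OF symmetric, of m v] by simp
  then obtain k where k: "s * (1 - bil G m v) = 2 * k" ..
  \<comment> \<open>k is chosen so that w is orthogonal to v, which puts w into L_-(c_v)\<close>
  define w where "w = y - s *s m + k *s v"
  have "w \<in> Lminus c"
    unfolding w_def using y m v_Lminus by (intro Lminus_add Lminus_diff Lminus_scale)
  moreover have "bil G w v = 0"
    using k unfolding w_def s_def
    by (simp add: bil_add_left bil_diff_left bil_scale_left v_square algebra_simps)
  ultimately have "w \<in> ?S"
    using Lminus_cv_iff by (intro zm.span_base) blast
  moreover have "m \<in> ?S" and "v \<in> ?S"
    using v_Lplus_cv by (intro zm.span_base; blast)+
  ultimately have "w + s *s m - k *s v \<in> ?S"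
    by (intro zm.span_add zm.span_diff zm.span_scale)
  then show "y \<in> ?S"
    unfolding w_def by simp
qed

lemma Lplus_cv_subset_span:
  assumes "m \<in> Lminus c" and "odd (bil G v m)"
  shows "Lplus cv \<subseteq> zm.span (Lplus c \<union> Lminus c)"
proof
  fix y assume y: "y \<in> Lplus cv"
  let ?S = "zm.span (Lplus c \<union> Lminus c)"
  obtain j where j: "bil G y v = 2 * j"
    using even_pairing_Lplus_cv[OF assms y] ..
  have "c y = y + bil G y v *s v"
    using y Lplus_cv_iff by blast
  then have "c (y + j *s v) = y + j *s v"
    by (simp add: c.add scale c_v j vec_eq_iff)
  then have "y + j *s v \<in> ?S"
    by (intro zm.span_base) (simp add: Lplus_def)
  moreover have "v \<in> ?S"
    using v_Lminus by (intro zm.span_base) blast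
  ultimately have "(y + j *s v) - j *s v \<in> ?S"
    by (intro zm.span_diff zm.span_scale)
  then show "y \<in> ?S"
    by simp
qed

lemma span_eigenspaces_eq_insert:
  assumes "m \<in> Lminus c" and "odd (bil G v m)"
  shows "zm.span (Lplus c \<union> Lminus c) = zm.span (insert m (Lplus cv \<union> Lminus cv))"
proof -
  have "Lplus c \<subseteq> zm.span (insert m (Lplus cv \<union> Lminus cv))"
    using Lplus_subset_Lplus_cv zm.span_superset[of "insert m (Lplus cv \<union> Lminus cv)"] by blast
  moreover have "insert m (Lplus cv \<union> Lminus cv) \<subseteq> zm.span (Lplus c \<union> Lminus c)"
    using Lplus_cv_subset_span[OF assms] assms(1) Lminus_cv_iff
      zm.span_superset[of "Lplus c \<union> Lminus c"] by blast
  ultimately show ?thesis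
    using Lminus_subset_span_insert[OF assms] unfolding zm.span_eq by blast
qed

lemma dinv_cv_odd:
  assumes "m \<in> Lminus c" and "odd (bil G v m)"
  shows "dinv cv = dinv c + 1"
proof -
  let ?H = "Lplus cv \<union> Lminus cv"
  have "m \<notin> zm.span ?H"
    using span_eigenspaces_cv_even_pairing[OF assms] assms(2) bil_commute[OF symmetric, of m v] by auto
  moreover have "2 *s x \<in> zm.span ?H" for x
    by (rule lattice_involution.double_in_span[OF lattice_involution.intro[OF cv_involution]])
  ultimately have "min_gens_mod ?H = min_gens_mod (insert m ?H) + 1"
    by (intro min_gens_mod_insert)
  then show ?thesis
    unfolding dinv_eq_min_gens_mod min_gens_mod_cong[OF span_eigenspaces_eq_insert[OF assms]] .
qed

lemma dinv_cv_even:
  assumes "unimodular G" and "even_elt G c v"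
  shows "dinv cv + 1 = dinv c"
proof -
  obtain x where x: "v = x - c x"
    using even_Lminus_is_coboundary[OF assms(1) v_Lminus] assms(2) unfolding even_elt_def by blast
  have "bil G v v = 2 * bil G x v"
    by (subst (1) x) (simp add: bil_diff_left bil_c_left_v)
  then have xv: "bil G x v = -1"
    using v_square by simp
  have "cv x = x"
    unfolding cv_apply xv using x by simp
  then have x_Lminus: "x \<in> Lminus (\<lambda>y. - cv y)"
    by (simp add: Lminus_def)
  interpret neg: root_reflection G "\<lambda>y. - cv y" v
  proof unfold_locales
    show "lat_involution G (\<lambda>y. - cv y)"
      by (rule lattice_involution.neg_involution[OF lattice_involution.intro[OF cv_involution]])
    show "v \<in> Lminus (\<lambda>y. - cv y)"
      unfolding Lminus_neg by (rule v_Lplus_cv)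
  qed (fact symmetric v_square)+
  have "odd (bil G v x)"
    using xv bil_commute[OF symmetric, of v x] by simp
  then have "dinv ((\<lambda>y. - cv y) \<circ> refl_v G v) = dinv (\<lambda>y. - cv y) + 1"
    by (rule neg.dinv_cv_odd[OF x_Lminus])
  moreover have "(\<lambda>y. - cv y) \<circ> refl_v G v = (\<lambda>y. - c y)"
    by (simp add: fun_eq_iff refl_v_involutive)
  ultimately show ?thesis
    using dinv_neg[of c] dinv_neg[of cv] by simp
qed

end

theorem proposition3p1:
  fixes G :: "int^'n^'n" and c :: "int^'n \<Rightarrow> int^'n" and v :: "int^'n"
  assumes "unimodular G"
    and "lat_involution G c"
    and "standing_assumption G c"
    and "v \<in> Lminus c"
    and "bil G v v = -2"
  shows "(odd_elt G c v \<longrightarrow> dinv (c \<circ> refl_v G v) = dinv c + 1)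
       \<and> (even_elt G c v \<longrightarrow> dinv (c \<circ> refl_v G v) + 1 = dinv c)
       \<and> (wu_elt G c v \<longleftrightarrow> even_involution G (c \<circ> refl_v G v))
       \<and> (even_involution G (c \<circ> refl_v G v) \<longrightarrow> dinv (c \<circ> refl_v G v) + 1 = dinv c)"
proof -
  interpret root_reflection G c v
    using assms(1,2,4,5) by unfold_locales (simp_all add: unimodular_def)
  have odd_case: "dinv cv = dinv c + 1" if "odd_elt G c v"
    using that dinv_cv_odd unfolding odd_elt_def by blast
  have even_case: "dinv cv + 1 = dinv c" if "even_elt G c v"
    using that by (rule dinv_cv_even[OF assms(1)])
  have "even_elt G c v" if "even_involution G cv"
    using that wu_elt_iff_even_involution unfolding wu_elt_def by blast
  then show ?thesis
    using odd_case even_case wu_elt_iff_even_involution by blast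
qed

end
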